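(* Let $n\ge 1$, let $\chi$ be an irreducible character of $S_n$, let $1\le k\le n$, let $X\in M_n(\mathbb{C})$ and fix $\alpha\in Q_{k,n}$. Then $$d_\chi(X)=\sum_{\beta\in Q_{k,n}} d_\chi\Big(X[\alpha|\beta]\bigoplus_{\alpha|\beta}X(\alpha|\beta)\Big).$$
   Context: $d_\chi(A)=\sum_{\sigma\in S_n}\chi(\sigma)\prod_{i=1}^n a_{i\sigma(i)}$ for $A=(a_{ij})\in M_n(\mathbb{C})$. $Q_{k,n}$ is the set of strictly increasing maps $\{1,\ldots,k\}\to\{1,\ldots,n\}$. For $\alpha\in Q_{k,n}$, $\bar\alpha$ is the unique element of $Q_{n-k,n}$ whose image is the complement of the image of $\alpha$. For $\alpha,\beta\in Q_{k,n}$, $X[\alpha|\beta]$ is the $k\times k$ matrix with $(i,j)$ entry $x_{\alpha(i)\beta(j)}$, and $X(\alpha|\beta)$ is the $(n-k)\times(n-k)$ matrix obtained from $X$ by deleting rows $\alpha(1),\ldots,\alpha(k)$ and columns $\beta(1),\ldots,\beta(k)$. For a $k\times k$ matrix $P=(p_{ij})$ and an $(n-k)\times(n-k)$ matrix $R=(r_{ij})$, $P\bigoplus_{\alpha|\beta}R=(y_{ij})$ is the $n\times n$ matrix with $y_{ij}=0$ if exactly one of $i\in\operatorname{Im}\alpha$, $j\in\operatorname{Im}\beta$ holds; $y_{ij}=p_{\alpha^{-1}(i)\beta^{-1}(j)}$ if $i\in\operatorname{Im}\alpha$ and $j\in\operatorname{Im}\beta$; and $y_{ij}=r_{\bar\alpha^{-1}(i)\bar\beta^{-1}(j)}$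 if $i\notin\operatorname{Im}\alpha$ and $j\notin\operatorname{Im}\beta$. *)

theory Defs
  imports "HOL-Combinatorics.Permutations" "Jordan_Normal_Form.Matrix"
begin

text \<open>Conventions: indices are 1-based. An n x n complex matrix is a function
  nat => nat => complex, of which only the entries with indices in {1..n} matter.
  S_n is the set of permutations of {1..n}.\<close>

definition Sym :: "nat \<Rightarrow> (nat \<Rightarrow> nat) set" where
  "Sym n = {\<sigma>. \<sigma> permutes {1..n}}"

definition is_rep :: "nat \<Rightarrow> nat \<Rightarrow> ((nat \<Rightarrow> nat) \<Rightarrow> complex mat) \<Rightarrow> bool" where
  "is_rep n d \<rho> \<longleftrightarrow> 0 < d \<and>
     (\<forall>\<sigma>\<in>Sym n. \<rho> \<sigma> \<in> carrier_mat d d) \<and>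
     \<rho> id = 1\<^sub>m d \<and>
     (\<forall>\<sigma>\<in>Sym n. \<forall>\<tau>\<in>Sym n. \<rho> (\<sigma> \<circ> \<tau>) = \<rho> \<sigma> * \<rho> \<tau>)"

definition is_subspace :: "nat \<Rightarrow> complex vec set \<Rightarrow> bool" where
  "is_subspace d W \<longleftrightarrow> W \<subseteq> carrier_vec d \<and> 0\<^sub>v d \<in> W \<and>
     (\<forall>v\<in>W. \<forall>w\<in>W. v + w \<in> W) \<and> (\<forall>c. \<forall>v\<in>W. c \<cdot>\<^sub>v v \<in> W)"

definition irreducible_rep :: "nat \<Rightarrow> nat \<Rightarrow> ((nat \<Rightarrow> nat) \<Rightarrow> complex mat) \<Rightarrow> bool" where
  "irreducible_rep n d \<rho> \<longleftrightarrow> is_rep n d \<rho> \<and>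
     (\<forall>W. is_subspace d W \<and> (\<forall>\<sigma>\<in>Sym n. \<forall>v\<in>W. \<rho> \<sigma> *\<^sub>v v \<in> W)
          \<longrightarrow> W = {0\<^sub>v d} \<or> W = carrier_vec d)"

definition mat_trace :: "complex mat \<Rightarrow> complex" where
  "mat_trace A = (\<Sum>i<dim_row A. A $$ (i, i))"

definition irreducible_character :: "nat \<Rightarrow> ((nat \<Rightarrow> nat) \<Rightarrow> complex) \<Rightarrow> bool" where
  "irreducible_character n \<chi> \<longleftrightarrow>
     (\<exists>d \<rho>. irreducible_rep n d \<rho> \<and> (\<forall>\<sigma>\<in>Sym n. \<chi> \<sigma> = mat_trace (\<rho> \<sigma>)))"

definition immanant :: "nat \<Rightarrow> ((nat \<Rightarrow> nat) \<Rightarrow> complex) \<Rightarrow> (nat \<Rightarrow> nat \<Rightarrow> complex) \<Rightarrow> complex" where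
  "immanant n \<chi> A = (\<Sum>\<sigma>\<in>Sym n. \<chi> \<sigma> * (\<Prod>i=1..n. A i (\<sigma> i)))"

text \<open>Q_{k,n}: strictly increasing maps {1..k} -> {1..n} (extended by 0 outside {1..k}).\<close>
definition Q :: "nat \<Rightarrow> nat \<Rightarrow> (nat \<Rightarrow> nat) set" where
  "Q k n = {f. (\<forall>i\<in>{1..k}. f i \<in> {1..n}) \<and> strict_mono_on {1..k} f \<and>
               (\<forall>i. i \<notin> {1..k} \<longrightarrow> f i = 0)}"

definition compl_map :: "nat \<Rightarrow> nat \<Rightarrow> (nat \<Rightarrow> nat) \<Rightarrow> (nat \<Rightarrow> nat)" where
  "compl_map k n \<alpha> = (THE g. g \<in> Q (n - k) n \<and> g ` {1..n-k} = {1..n} - \<alpha> ` {1..k})"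

definition submat :: "(nat \<Rightarrow> nat \<Rightarrow> complex) \<Rightarrow> (nat \<Rightarrow> nat) \<Rightarrow> (nat \<Rightarrow> nat) \<Rightarrow> nat \<Rightarrow> nat \<Rightarrow> complex" where
  "submat X \<alpha> \<beta> = (\<lambda>i j. X (\<alpha> i) (\<beta> j))"

definition delmat :: "nat \<Rightarrow> nat \<Rightarrow> (nat \<Rightarrow> nat \<Rightarrow> complex) \<Rightarrow> (nat \<Rightarrow> nat) \<Rightarrow> (nat \<Rightarrow> nat) \<Rightarrow> nat \<Rightarrow> nat \<Rightarrow> complex" where
  "delmat k n X \<alpha> \<beta> = (\<lambda>i j. X (compl_map k n \<alpha> i) (compl_map k n \<beta> j))"

definition dsum :: "nat \<Rightarrow> nat \<Rightarrow> (nat \<Rightarrow> nat) \<Rightarrow> (nat \<Rightarrow> nat) \<Rightarrow>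
    (nat \<Rightarrow> nat \<Rightarrow> complex) \<Rightarrow> (nat \<Rightarrow> nat \<Rightarrow> complex) \<Rightarrow> nat \<Rightarrow> nat \<Rightarrow> complex" where
  "dsum k n \<alpha> \<beta> P R = (\<lambda>i j.
     if i \<in> \<alpha> ` {1..k} \<and> j \<in> \<beta> ` {1..k}
       then P (inv_into {1..k} \<alpha> i) (inv_into {1..k} \<beta> j)
     else if i \<notin> \<alpha> ` {1..k} \<and> j \<notin> \<beta> ` {1..k}
       then R (inv_into {1..n-k} (compl_map k n \<alpha>) i) (inv_into {1..n-k} (compl_map k n \<beta>) j)
     else 0)"

end

theory Submission
  imports Defs
begin

text \<open>Write \<open>A = Im \<alpha>\<close> and \<open>B = Im \<beta>\<close>. Along a permutation \<open>\<sigma>\<close>, the diagonal product of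
  the direct sum \<open>X[\<alpha>|\<beta>] \<oplus> X(\<alpha>|\<beta>)\<close> equals that of \<open>X\<close> when \<open>\<sigma>\<close> maps \<open>A\<close> onto \<open>B\<close>,
  and contains one of the zero off-diagonal blocks otherwise. Every \<open>\<sigma>\<close> maps \<open>A\<close> onto
  \<open>Im \<beta>\<close> for exactly one \<open>\<beta> \<in> Q\<^sub>k\<^sub>,\<^sub>n\<close>, so after swapping the two sums each term
  \<open>\<chi>(\<sigma>) \<Prod>\<^sub>i x\<^sub>i\<^sub>\<sigma>\<^sub>(\<^sub>i\<^sub>)\<close> is counted exactly once. Hence the identity holds for every
  function \<open>\<chi>\<close>.\<close>

definition increasing_enum :: "nat \<Rightarrow> nat set \<Rightarrow> nat \<Rightarrow> nat" where
  "increasing_enum m S = (\<lambda>i. if i \<in> {1..m} then sorted_list_of_set S ! (i - 1) else 0)"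

lemma
  assumes "S \<subseteq> {1..n}" "card S = m"
  shows increasing_enum_in_Q: "increasing_enum m S \<in> Q m n"
    and image_increasing_enum: "increasing_enum m S ` {1..m} = S"
proof -
  define xs where "xs = sorted_list_of_set S"
  have "finite S" using assms(1) finite_subset by blast
  then have len: "length xs = m" and set_xs: "set xs = S"
    using assms(2) by (simp_all add: xs_def)
  have sorted: "sorted_wrt (<) xs" by (simp add: xs_def)
  have enum_eq: "increasing_enum m S = (\<lambda>i. if i \<in> {1..m} then xs ! (i - 1) else 0)"
    unfolding increasing_enum_def xs_def ..
  have "increasing_enum m S ` {1..m} = (\<lambda>i. xs ! (i - 1)) ` Suc ` {0..<m}"
    unfolding enum_eq image_Suc_atLeastLessThan by auto
  also have "\<dots> = (!) xs ` {0..<length xs}" by (simp only: image_image diff_Suc_1 len)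
  also have "\<dots> = set xs" by (auto simp: set_conv_nth)
  finally show image: "increasing_enum m S ` {1..m} = S" using set_xs by simp
  have "strict_mono_on {1..m} (increasing_enum m S)"
    using sorted_wrt_nth_less[OF sorted] len
    by (auto simp: strict_mono_on_def enum_eq)
  then show "increasing_enum m S \<in> Q m n"
    using image assms(1) by (auto simp: Q_def enum_eq)
qed

lemma Q_eq_increasing_enum:
  assumes "g \<in> Q m n"
  shows "g = increasing_enum m (g ` {1..m})"
proof
  fix i
  have mono: "strict_mono_on {1..m} g" and zero: "\<And>i. i \<notin> {1..m} \<Longrightarrow> g i = 0"
    using assms by (auto simp: Q_def)
  define ys where "ys = map g [1..<m+1]"
  have "sorted_wrt (<) ys"
    unfolding sorted_wrt_iff_nth_less ys_def using mono
    by (auto simp: strict_mono_on_def simp del: upt_Suc)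
  moreover have "set ys = g ` {1..m}" by (auto simp: ys_def)
  ultimately have sorted_ys: "sorted_list_of_set (g ` {1..m}) = ys"
    using strict_sorted_equal[of ys "sorted_list_of_set (g ` {1..m})"] by simp
  show "g i = increasing_enum m (g ` {1..m}) i"
  proof (cases "i \<in> {1..m}")
    case True
    then have "ys ! (i - 1) = g i" by (auto simp: ys_def simp del: upt_Suc)
    then show ?thesis using True unfolding increasing_enum_def sorted_ys by simp
  next
    case False
    then show ?thesis by (auto simp: increasing_enum_def zero)
  qed
qed

lemma
  assumes "g \<in> Q m n"
  shows card_image_Q: "card (g ` {1..m}) = m"
    and image_Q_subset: "g ` {1..m} \<subseteq> {1..n}"
proof -
  have "strict_mono_on {1..m} g" using assms by (simp add: Q_def)
  then show "card (g ` {1..m}) = m" by (simp add: card_image strict_mono_on_imp_inj_on)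
  show "g ` {1..m} \<subseteq> {1..n}" using assms by (auto simp: Q_def)
qed

lemma
  assumes "\<alpha> \<in> Q k n" "\<sigma> permutes {1..n}"
  shows card_permuted_image_Q: "card (\<sigma> ` \<alpha> ` {1..k}) = k"
    and permuted_image_Q_subset: "\<sigma> ` \<alpha> ` {1..k} \<subseteq> {1..n}"
proof -
  have "card (\<sigma> ` \<alpha> ` {1..k}) = card (\<alpha> ` {1..k})"
    using permutes_inj[OF assms(2)] by (simp add: card_image inj_on_subset)
  then show "card (\<sigma> ` \<alpha> ` {1..k}) = k" by (simp only: card_image_Q[OF assms(1)])
  show "\<sigma> ` \<alpha> ` {1..k} \<subseteq> {1..n}"
    using image_Q_subset[OF assms(1)] permutes_in_image[OF assms(2)] by blast
qed

lemma finite_Q: "finite (Q k n)"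
proof (rule finite_subset)
  show "Q k n \<subseteq> increasing_enum k ` Pow {1..n}"
  proof
    fix g assume g: "g \<in> Q k n"
    show "g \<in> increasing_enum k ` Pow {1..n}"
      using Q_eq_increasing_enum[OF g] image_Q_subset[OF g] by (metis PowI image_eqI)
  qed
qed simp

lemma Q_with_image:
  assumes "S \<subseteq> {1..n}" "card S = m"
  shows "{g \<in> Q m n. g ` {1..m} = S} = {increasing_enum m S}"
proof
  show "{increasing_enum m S} \<subseteq> {g \<in> Q m n. g ` {1..m} = S}"
    using increasing_enum_in_Q[OF assms] image_increasing_enum[OF assms] by simp
  show "{g \<in> Q m n. g ` {1..m} = S} \<subseteq> {increasing_enum m S}"
    using Q_eq_increasing_enum by auto
qed

lemma sum_Q_if_image_eq:
  assumes "S \<subseteq> {1..n}" "card S = m"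
  shows "(\<Sum>g\<in>Q m n. if g ` {1..m} = S then c else 0) = c"
proof -
  have "(\<Sum>g\<in>Q m n. if g ` {1..m} = S then c else 0) = (\<Sum>g\<in>{g \<in> Q m n. g ` {1..m} = S}. c)"
    by (rule sum.inter_filter[OF finite_Q, symmetric])
  also have "\<dots> = c" unfolding Q_with_image[OF assms] by simp
  finally show ?thesis .
qed

lemma image_compl_map:
  assumes "\<alpha> \<in> Q k n"
  shows "compl_map k n \<alpha> ` {1..n-k} = {1..n} - \<alpha> ` {1..k}"
proof -
  define C where "C = {1..n} - \<alpha> ` {1..k}"
  have "C \<subseteq> {1..n}" by (auto simp: C_def)
  moreover have "card C = n - k"
    using card_image_Q[OF assms] image_Q_subset[OF assms]
    by (simp add: C_def card_Diff_subset finite_subset)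
  ultimately have "\<exists>!g. g \<in> Q (n - k) n \<and> g ` {1..n-k} = C"
    using Q_with_image by (metis (mono_tags, lifting) mem_Collect_eq singletonD singletonI)
  then show ?thesis
    unfolding compl_map_def C_def[symmetric] by (rule theI'[THEN conjunct2])
qed

lemma dsum_submat_delmat_eq:
  assumes "\<alpha> \<in> Q k n" "\<beta> \<in> Q k n" "i \<in> {1..n}" "j \<in> {1..n}"
    and "i \<in> \<alpha> ` {1..k} \<longleftrightarrow> j \<in> \<beta> ` {1..k}"
  shows "dsum k n \<alpha> \<beta> (submat X \<alpha> \<beta>) (delmat k n X \<alpha> \<beta>) i j = X i j"
proof (cases "i \<in> \<alpha> ` {1..k}")
  case True
  then show ?thesis
    using assms(5) by (simp add: dsum_def submat_def f_inv_into_f)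
next
  case False
  then have "i \<in> compl_map k n \<alpha> ` {1..n-k}" "j \<in> compl_map k n \<beta> ` {1..n-k}"
    unfolding image_compl_map[OF assms(1)] image_compl_map[OF assms(2)] using assms by simp_all
  then show ?thesis
    using False assms(5) by (simp add: dsum_def delmat_def f_inv_into_f)
qed

lemma prod_dsum_submat_delmat:
  assumes \<alpha>: "\<alpha> \<in> Q k n" and \<beta>: "\<beta> \<in> Q k n" and \<sigma>: "\<sigma> permutes {1..n}"
  shows "(\<Prod>i=1..n. dsum k n \<alpha> \<beta> (submat X \<alpha> \<beta>) (delmat k n X \<alpha> \<beta>) i (\<sigma> i)) =
     (if \<beta> ` {1..k} = \<sigma> ` \<alpha> ` {1..k} then \<Prod>i=1..n. X i (\<sigma> i) else 0)"
proof (cases "\<beta> ` {1..k} = \<sigma> ` \<alpha> ` {1..k}")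
  case True
  have iff: "i \<in> \<alpha> ` {1..k} \<longleftrightarrow> \<sigma> i \<in> \<beta> ` {1..k}" for i
    unfolding True using permutes_inj[OF \<sigma>] by (simp add: inj_image_mem_iff)
  have "(\<Prod>i=1..n. dsum k n \<alpha> \<beta> (submat X \<alpha> \<beta>) (delmat k n X \<alpha> \<beta>) i (\<sigma> i)) =
      (\<Prod>i=1..n. X i (\<sigma> i))"
    using \<alpha> \<beta> iff permutes_in_image[OF \<sigma>] by (intro prod.cong refl dsum_submat_delmat_eq) auto
  with True show ?thesis by simp
next
  case False
  have "\<not> \<sigma> ` \<alpha> ` {1..k} \<subseteq> \<beta> ` {1..k}"
  proof
    assume sub: "\<sigma> ` \<alpha> ` {1..k} \<subseteq> \<beta> ` {1..k}"
    have "card (\<sigma> ` \<alpha> ` {1..k}) = card (\<beta> ` {1..k})"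
      by (simp only: card_permuted_image_Q[OF \<alpha> \<sigma>] card_image_Q[OF \<beta>])
    then have "\<sigma> ` \<alpha> ` {1..k} = \<beta> ` {1..k}"
      by (rule card_subset_eq[OF finite_imageI[OF finite_atLeastAtMost] sub])
    with False show False by simp
  qed
  then obtain i where "i \<in> \<alpha> ` {1..k}" "\<sigma> i \<notin> \<beta> ` {1..k}" by blast
  moreover have "i \<in> {1..n}" using \<open>i \<in> \<alpha> ` {1..k}\<close> image_Q_subset[OF \<alpha>] by blast
  ultimately show ?thesis
    using False by (intro trans[OF prod_zero if_not_P[symmetric]]) (auto simp: dsum_def)
qed

theorem mainTheorem4:
  fixes n k :: nat and \<chi> :: "(nat \<Rightarrow> nat) \<Rightarrow> complex"
    and X :: "nat \<Rightarrow> nat \<Rightarrow> complex" and \<alpha> :: "nat \<Rightarrow> nat"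
  assumes "1 \<le> n" and "irreducible_character n \<chi>"
    and "1 \<le> k" and "k \<le> n" and "\<alpha> \<in> Q k n"
  shows "immanant n \<chi> X =
    (\<Sum>\<beta>\<in>Q k n. immanant n \<chi> (dsum k n \<alpha> \<beta> (submat X \<alpha> \<beta>) (delmat k n X \<alpha> \<beta>)))"
proof -
  let ?t = "\<lambda>\<sigma>. \<chi> \<sigma> * (\<Prod>i=1..n. X i (\<sigma> i))"
  have "(\<Sum>\<beta>\<in>Q k n. immanant n \<chi> (dsum k n \<alpha> \<beta> (submat X \<alpha> \<beta>) (delmat k n X \<alpha> \<beta>)))
      = (\<Sum>\<beta>\<in>Q k n. \<Sum>\<sigma>\<in>Sym n. if \<beta> ` {1..k} = \<sigma> ` \<alpha> ` {1..k} then ?t \<sigma> else 0)"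
    unfolding immanant_def Sym_def using \<open>\<alpha> \<in> Q k n\<close>
    \<comment> \<open>\<open>One_nat_def\<close> would rewrite \<open>{1..k}\<close> to \<open>{Suc 0..k}\<close> before the lemma can match\<close>
    by (intro sum.cong refl) (simp add: prod_dsum_submat_delmat del: One_nat_def)
  also have "\<dots> = (\<Sum>\<sigma>\<in>Sym n. \<Sum>\<beta>\<in>Q k n. if \<beta> ` {1..k} = \<sigma> ` \<alpha> ` {1..k} then ?t \<sigma> else 0)"
    by (rule sum.swap)
  also have "\<dots> = (\<Sum>\<sigma>\<in>Sym n. ?t \<sigma>)"
  proof (intro sum.cong refl sum_Q_if_image_eq)
    fix \<sigma> assume "\<sigma> \<in> Sym n"
    then have \<sigma>: "\<sigma> permutes {1..n}" by (simp add: Sym_def)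
    show "\<sigma> ` \<alpha> ` {1..k} \<subseteq> {1..n}" "card (\<sigma> ` \<alpha> ` {1..k}) = k"
      using permuted_image_Q_subset[OF \<open>\<alpha> \<in> Q k n\<close> \<sigma>]
        card_permuted_image_Q[OF \<open>\<alpha> \<in> Q k n\<close> \<sigma>] by auto
  qed
  finally show ?thesis by (simp add: immanant_def)
qed

end
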